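(* Let $n\ge2$ and let $\mathcal D$ be the $n$-adic filtration of $[0,1]$. Then every Haar function $h$ on an interval $I\in\mathcal D$ can be written as a sum $h=\sum_k h_k$ of at most $n$ elementary Haar functions $h_k$ on $I$, such that moreover $|h|=\sum_k|h_k|$ pointwise.
   Context: The $n$-adic filtration of $[0,1]$: $\mathcal D_0=\{[0,1]\}$ and each interval of $\mathcal D_k$ is split into $n$ consecutive subintervals of equal length (its children $\mathrm{ch}(I)$), forming $\mathcal D_{k+1}$; $\mathcal D=\bigcup_k\mathcal D_k$. A Haar function on $I\in\mathcal D$ is a function $h$ supported on $I$, constant on each child of $I$, with $\int_I h\,dx=0$. A Haar function on $I$ is elementary if it is nonzero on at most two children of $I$, i.e. it has the form $c(\mathbf 1_{I_{k_1}}-\mathbf 1_{I_{k_2}})$ with $I_{k_1},I_{k_2}\in\mathrm{ch}(I)$ and $c$ a constant. *)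

theory Defs
  imports "HOL-Analysis.Analysis"
begin

text \<open>The j-th interval of generation k of the n-adic filtration (j < n^k),
  taken half-open so that the children of an interval partition it.\<close>
definition nadic_int :: "nat \<Rightarrow> nat \<Rightarrow> nat \<Rightarrow> real set" where
  "nadic_int n k j = {real j / real n ^ k ..< real (Suc j) / real n ^ k}"

definition nadic_child :: "nat \<Rightarrow> nat \<Rightarrow> nat \<Rightarrow> nat \<Rightarrow> real set" where
  "nadic_child n k j i = nadic_int n (Suc k) (n * j + i)"

definition haar_on :: "nat \<Rightarrow> nat \<Rightarrow> nat \<Rightarrow> (real \<Rightarrow> real) \<Rightarrow> bool" where
  "haar_on n k j h \<longleftrightarrow>
     (\<forall>x. x \<notin> nadic_int n k j \<longrightarrow> h x = 0) \<and>
     (\<forall>i<n. \<exists>c. \<forall>x\<in>nadic_child n k j i. h x = c) \<and>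
     (h has_integral 0) (nadic_int n k j)"

definition elementary_haar_on :: "nat \<Rightarrow> nat \<Rightarrow> nat \<Rightarrow> (real \<Rightarrow> real) \<Rightarrow> bool" where
  "elementary_haar_on n k j h \<longleftrightarrow> haar_on n k j h \<and>
     (\<exists>i1<n. \<exists>i2<n. \<exists>c::real.
        h = (\<lambda>x. c * (indicator (nadic_child n k j i1) x - indicator (nadic_child n k j i2) x)))"

end

theory Submission
  imports Defs
begin

text \<open>A Haar function on I takes a value c i on the i-th child, and \<open>\<Sum>i<n. c i = 0\<close> because
  its integral vanishes. A zero-sum vector is split greedily: choose p with c p > 0 and q with
  c q < 0 and move min (c p) (- c q) from p to q. Each move kills a nonzero entry, so there are
  at most n of them, and none changes a sign, so the absolute values of the resulting
  elementary Haar functions add up to \<open>\<bar>h\<bar>\<close>.\<close>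

lemma nadic_int_iff:
  assumes "n > 0"
  shows "x \<in> nadic_int n k a \<longleftrightarrow> 0 \<le> x \<and> nat \<lfloor>x * real n ^ k\<rfloor> = a"
proof -
  have N: "real n ^ k > 0" using assms by simp
  have "x \<in> nadic_int n k a \<longleftrightarrow> real a \<le> x * real n ^ k \<and> x * real n ^ k < real a + 1"
    using N by (simp add: nadic_int_def divide_le_eq less_divide_eq add.commute)
  also have "\<dots> \<longleftrightarrow> 0 \<le> x * real n ^ k \<and> nat \<lfloor>x * real n ^ k\<rfloor> = a"
    by (auto simp: floor_eq_iff nat_eq_iff)
  also have "0 \<le> x * real n ^ k \<longleftrightarrow> 0 \<le> x"
    using N by (meson less_eq_real_def linorder_not_le zero_le_mult_iff)
  finally show ?thesis .
qed

lemma nadic_int_disjoint: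
  assumes "n > 0" "a \<noteq> b"
  shows "nadic_int n k a \<inter> nadic_int n k b = {}"
  using assms by (auto simp: nadic_int_iff)

lemma nadic_int_Suc_subset:
  assumes "n > 0"
  shows "nadic_int n (Suc k) t \<subseteq> nadic_int n k (t div n)"
proof -
  have N: "real n ^ Suc k > 0" using assms by simp
  have "t = n * (t div n) + t mod n" "t mod n < n"
    using assms by simp_all
  then have le: "n * (t div n) \<le> t" "Suc t \<le> n * Suc (t div n)"
    by (linarith, metis add_Suc add_le_mono1 less_eq_Suc_le mod_mult_div_eq mult_Suc_right)
  have scale: "real m / real n ^ k = real (n * m) / real n ^ Suc k" for m
    using assms by simp
  have "real (t div n) / real n ^ k \<le> real t / real n ^ Suc k"
    unfolding scale using N le(1) by (intro divide_right_mono) (simp only: of_nat_le_iff, simp)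
  moreover have "real (Suc t) / real n ^ Suc k \<le> real (Suc (t div n)) / real n ^ k"
    unfolding scale using N le(2) by (intro divide_right_mono) (simp only: of_nat_le_iff, simp)
  ultimately show ?thesis
    unfolding nadic_int_def by (auto simp only: atLeastLessThan_iff subset_iff intro: order_trans less_le_trans)
qed

lemma nadic_child_subset:
  assumes "n > 0" "i < n"
  shows "nadic_child n k j i \<subseteq> nadic_int n k j"
  using nadic_int_Suc_subset[OF assms(1), of k "n * j + i"] assms by (simp add: nadic_child_def)

lemma nadic_child_cover:
  assumes "n > 0" "x \<in> nadic_int n k j"
  obtains i where "i < n" "x \<in> nadic_child n k j i"
proof -
  define t where "t = nat \<lfloor>x * real n ^ Suc k\<rfloor>"
  have "x \<in> nadic_int n (Suc k) t"
    using assms by (simp add: nadic_int_iff t_def)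
  with nadic_int_Suc_subset[OF assms(1)] have "x \<in> nadic_int n k (t div n)" by blast
  with assms have "t div n = j" using nadic_int_disjoint by blast
  then have "t = n * j + t mod n" by (metis mult_div_mod_eq)
  then show ?thesis
    using that[of "t mod n"] \<open>x \<in> nadic_int n (Suc k) t\<close> assms(1) by (simp add: nadic_child_def)
qed

definition dipole :: "real \<Rightarrow> 'a \<Rightarrow> 'a \<Rightarrow> 'a \<Rightarrow> real" where
  "dipole a p q i = a * (of_bool (i = p) - of_bool (i = q))"

lemma sum_dipole:
  assumes "finite A" "p \<in> A" "q \<in> A"
  shows "(\<Sum>i\<in>A. dipole a p q i) = 0"
proof -
  have "(\<Sum>i\<in>A. dipole a p q i) = a * (\<Sum>i\<in>A. of_bool (i = p)) - a * (\<Sum>i\<in>A. of_bool (i = q))"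
    by (simp add: dipole_def sum_subtractf sum_distrib_left right_diff_distrib)
  also have "\<dots> = 0"
    using assms by (simp add: of_bool_def sum.delta)
  finally show ?thesis .
qed

lemma zero_sum_obtains_pos_neg:
  fixes c :: "'a \<Rightarrow> real"
  assumes "finite A" "(\<Sum>i\<in>A. c i) = 0" "i \<in> A" "c i \<noteq> 0"
  obtains p q where "p \<in> A" "q \<in> A" "c p > 0" "c q < 0"
proof -
  have "\<exists>p\<in>A. c p > 0"
  proof (rule ccontr)
    assume "\<not> ?thesis"
    then have "\<forall>x\<in>A. 0 \<le> - c x" by force
    with assms sum_nonneg_eq_0_iff[of A "\<lambda>x. - c x"] show False by (simp add: sum_negf)
  qed
  moreover have "\<exists>q\<in>A. c q < 0"
  proof (rule ccontr)
    assume "\<not> ?thesis"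
    then have "\<forall>x\<in>A. 0 \<le> c x" by force
    with assms sum_nonneg_eq_0_iff[of A c] show False by simp
  qed
  ultimately show ?thesis using that by blast
qed

lemma zero_sum_dipole_decomposition:
  fixes c :: "'a \<Rightarrow> real"
  assumes "finite A" "(\<Sum>i\<in>A. c i) = 0"
  shows "\<exists>m \<le> card {i\<in>A. c i \<noteq> 0}. \<exists>a p q. (\<forall>l<m. p l \<in> A \<and> q l \<in> A) \<and>
           (\<forall>i\<in>A. c i = (\<Sum>l<m. dipole (a l) (p l) (q l) i) \<and>
                   \<bar>c i\<bar> = (\<Sum>l<m. \<bar>dipole (a l) (p l) (q l) i\<bar>))"
  using assms(2)
proof (induction "card {i\<in>A. c i \<noteq> 0}" arbitrary: c rule: less_induct)
  case less
  show ?case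
  proof (cases "\<forall>i\<in>A. c i = 0")
    case True
    then show ?thesis by (intro exI[of _ 0]) auto
  next
    case False
    then obtain p q where pq: "p \<in> A" "q \<in> A" "c p > 0" "c q < 0"
      using zero_sum_obtains_pos_neg[OF assms(1) less.prems] by blast
    define a where "a = min (c p) (- c q)"
    define c' where "c' i = c i - dipole a p q i" for i
    have "p \<noteq> q" using pq by auto
    then have c'_pq: "c' p = c p - a" "c' q = c q + a" and c'_other: "\<And>i. i \<noteq> p \<Longrightarrow> i \<noteq> q \<Longrightarrow> c' i = c i"
      by (simp_all add: c'_def dipole_def)
    \<comment> \<open>Moving the mass a from p to q never changes a sign, so absolute values add up.\<close>
    have abs_split: "\<bar>c i\<bar> = \<bar>c' i\<bar> + \<bar>dipole a p q i\<bar>" for i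
      using pq c'_pq c'_other \<open>p \<noteq> q\<close> by (cases "i = p"; cases "i = q") (auto simp: a_def dipole_def)
    have "(\<Sum>i\<in>A. c' i) = 0"
      using less.prems sum_dipole[OF assms(1) pq(1,2)] by (simp add: c'_def sum_subtractf)
    moreover have "{i\<in>A. c' i \<noteq> 0} \<subset> {i\<in>A. c i \<noteq> 0}"
    proof -
      have "{i\<in>A. c' i \<noteq> 0} \<subseteq> {i\<in>A. c i \<noteq> 0}"
        using pq c'_other by (auto, metis less_irrefl)
      moreover have "c' p = 0 \<or> c' q = 0"
        unfolding c'_pq a_def by linarith
      ultimately show ?thesis using pq by auto
    qed
    then have "card {i\<in>A. c' i \<noteq> 0} < card {i\<in>A. c i \<noteq> 0}"
      using assms(1) by (intro psubset_card_mono) auto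
    ultimately obtain m a' p' q' where m: "m \<le> card {i\<in>A. c' i \<noteq> 0}"
      and A: "\<forall>l<m. p' l \<in> A \<and> q' l \<in> A"
      and B: "\<forall>i\<in>A. c' i = (\<Sum>l<m. dipole (a' l) (p' l) (q' l) i) \<and>
                     \<bar>c' i\<bar> = (\<Sum>l<m. \<bar>dipole (a' l) (p' l) (q' l) i\<bar>)"
      using less.hyps by blast
    show ?thesis
    proof (intro exI conjI)
      show "Suc m \<le> card {i\<in>A. c i \<noteq> 0}"
        using m \<open>card {i\<in>A. c' i \<noteq> 0} < _\<close> by linarith
      show "\<forall>l<Suc m. case_nat p p' l \<in> A \<and> case_nat q q' l \<in> A"
        using A pq by (auto simp: less_Suc_eq_0_disj)
      show "\<forall>i\<in>A. c i = (\<Sum>l<Suc m. dipole (case_nat a a' l) (case_nat p p' l) (case_nat q q' l) i) \<and>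
              \<bar>c i\<bar> = (\<Sum>l<Suc m. \<bar>dipole (case_nat a a' l) (case_nat p p' l) (case_nat q q' l) i\<bar>)"
        unfolding sum.lessThan_Suc_shift using B abs_split by (auto simp: c'_def)
    qed
  qed
qed

lemma has_integral_indicator_atLeastLessThan:
  fixes a b :: real
  assumes "a \<le> b" "{a..<b} \<subseteq> S"
  shows "(indicator {a..<b} has_integral (b - a)) S"
proof -
  have "((\<lambda>x. 1::real) has_integral (b - a)) {a..b}"
    using has_integral_const_real[of "1::real" a b] assms by simp
  then have "((\<lambda>x. 1::real) has_integral (b - a)) {a..<b}"
    by (rule has_integral_spike_set_eq[THEN iffD1, rotated -1])
       (auto intro: negligible_subset[of "{b}"])
  then have "((\<lambda>x. if x \<in> {a..<b} then 1 else 0) has_integral (b - a)) S"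
    using has_integral_restrict[OF assms(2), of "\<lambda>x. 1::real"] by (simp del: atLeastLessThan_iff)
  then show ?thesis
    by (simp add: indicator_def[abs_def] of_bool_def del: atLeastLessThan_iff)
qed

lemma nadic_child_has_integral:
  assumes "n > 0" "i < n"
  shows "(indicator (nadic_child n k j i) has_integral (1 / real n ^ Suc k)) (nadic_int n k j)"
proof -
  have "real (n * j + i) / real n ^ Suc k \<le> real (Suc (n * j + i)) / real n ^ Suc k"
    by (intro divide_right_mono) simp_all
  then have "(indicator (nadic_child n k j i) has_integral
      (real (Suc (n * j + i)) / real n ^ Suc k - real (n * j + i) / real n ^ Suc k)) (nadic_int n k j)"
    using nadic_child_subset[OF assms]
    unfolding nadic_child_def nadic_int_def by (intro has_integral_indicator_atLeastLessThan)
  then show ?thesis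
    by (simp add: diff_divide_distrib[symmetric])
qed

lemma indicator_nadic_child:
  assumes "n > 0" "x \<in> nadic_child n k j i0"
  shows "indicator (nadic_child n k j i) x = (of_bool (i = i0) :: real)"
  using assms nadic_int_disjoint[OF assms(1), of "n * j + i" "n * j + i0" "Suc k"]
  by (auto simp: nadic_child_def indicator_def)

lemma indicator_nadic_child_notin:
  assumes "n > 0" "i < n" "x \<notin> nadic_int n k j"
  shows "indicator (nadic_child n k j i) x = (0 :: real)"
  using assms nadic_child_subset[OF assms(1,2)] by (auto simp: indicator_def)

lemma sum_indicator_nadic_child:
  fixes f :: "nat \<Rightarrow> real"
  assumes "n > 0" "i0 < n" "x \<in> nadic_child n k j i0"
  shows "(\<Sum>i<n. f i * indicator (nadic_child n k j i) x) = f i0"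
proof -
  have "(\<Sum>i<n. f i * indicator (nadic_child n k j i) x) = (\<Sum>i<n. if i = i0 then f i else 0)"
    by (intro sum.cong) (simp_all add: indicator_nadic_child[OF assms(1,3)])
  also have "\<dots> = f i0"
    using assms(2) by simp
  finally show ?thesis .
qed

lemma haar_on_step_function:
  assumes "n > 0" "haar_on n k j h"
  obtains c where "\<And>x. h x = (\<Sum>i<n. c i * indicator (nadic_child n k j i) x)"
    and "(\<Sum>i<n. c i) = 0"
proof -
  obtain c where c: "\<And>i x. i < n \<Longrightarrow> x \<in> nadic_child n k j i \<Longrightarrow> h x = c i"
    using assms(2) unfolding haar_on_def by metis
  have h_eq: "h x = (\<Sum>i<n. c i * indicator (nadic_child n k j i) x)" for x
  proof (cases "x \<in> nadic_int n k j")
    case True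
    then obtain i0 where i0: "i0 < n" "x \<in> nadic_child n k j i0"
      using nadic_child_cover[OF assms(1)] by blast
    then show ?thesis
      using c[OF i0] sum_indicator_nadic_child[OF assms(1) i0, of c] by simp
  next
    case False
    then show ?thesis
      using assms indicator_nadic_child_notin by (simp add: haar_on_def)
  qed
  have "(h has_integral (\<Sum>i<n. c i * (1 / real n ^ Suc k))) (nadic_int n k j)"
    unfolding h_eq[abs_def]
    by (intro has_integral_sum has_integral_mult_right nadic_child_has_integral assms(1)) auto
  with assms(2) have "(\<Sum>i<n. c i * (1 / real n ^ Suc k)) = 0"
    unfolding haar_on_def using has_integral_unique by blast
  then have "(\<Sum>i<n. c i) = 0"
    using assms(1) by (simp add: sum_divide_distrib[symmetric])
  with h_eq that show ?thesis by blast
qed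

lemma elementary_haar_on_child_difference:
  assumes "n > 0" "p < n" "q < n"
  shows "elementary_haar_on n k j
           (\<lambda>x. a * (indicator (nadic_child n k j p) x - indicator (nadic_child n k j q) x))"
    (is "elementary_haar_on n k j ?g")
proof -
  have "haar_on n k j ?g"
    unfolding haar_on_def
  proof (intro conjI allI impI)
    show "?g x = 0" if "x \<notin> nadic_int n k j" for x
      using indicator_nadic_child_notin[OF assms(1) _ that] assms by simp
    show "\<exists>c. \<forall>x\<in>nadic_child n k j i. ?g x = c" for i
      by (intro exI[of _ "dipole a p q i"]) (simp add: dipole_def indicator_nadic_child[OF assms(1)])
    have "(?g has_integral a * (1 / real n ^ Suc k - 1 / real n ^ Suc k)) (nadic_int n k j)"
      using assms by (intro has_integral_mult_right has_integral_diff nadic_child_has_integral)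
    then show "(?g has_integral 0) (nadic_int n k j)" by simp
  qed
  then show ?thesis
    unfolding elementary_haar_on_def using assms(2,3)
    by (intro conjI exI[of _ p] exI[of _ q] exI[of _ a]) simp_all
qed

lemma step_function_dipole_expansion:
  fixes c a :: "nat \<Rightarrow> real"
  assumes n: "n > 0" and pq: "\<forall>l<m. p l \<in> {..<n} \<and> q l \<in> {..<n}"
    and c_eq: "\<forall>i\<in>{..<n}. c i = (\<Sum>l<m. dipole (a l) (p l) (q l) i) \<and>
                          \<bar>c i\<bar> = (\<Sum>l<m. \<bar>dipole (a l) (p l) (q l) i\<bar>)"
  shows "(\<Sum>i<n. c i * indicator (nadic_child n k j i) x) =
           (\<Sum>l<m. a l * (indicator (nadic_child n k j (p l)) x - indicator (nadic_child n k j (q l)) x)) \<and>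
         \<bar>\<Sum>i<n. c i * indicator (nadic_child n k j i) x\<bar> =
           (\<Sum>l<m. \<bar>a l * (indicator (nadic_child n k j (p l)) x - indicator (nadic_child n k j (q l)) x)\<bar>)"
proof (cases "x \<in> nadic_int n k j")
  case True
  then obtain i0 where i0: "i0 < n" "x \<in> nadic_child n k j i0"
    using nadic_child_cover[OF n] by blast
  have g_at: "a l * (indicator (nadic_child n k j (p l)) x - indicator (nadic_child n k j (q l)) x) =
      dipole (a l) (p l) (q l) i0" for l
    by (simp add: dipole_def indicator_nadic_child[OF n i0(2)])
  have "i0 \<in> {..<n}" using i0(1) by simp
  from bspec[OF c_eq this] show ?thesis
    unfolding sum_indicator_nadic_child[OF n i0] g_at .
next
  case False
  have "(\<Sum>i<n. c i * indicator (nadic_child n k j i) x) = 0"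
    by (intro sum.neutral) (simp add: indicator_nadic_child_notin[OF n _ False])
  moreover have "indicator (nadic_child n k j (p l)) x = (0::real)"
    "indicator (nadic_child n k j (q l)) x = (0::real)" if "l < m" for l
    using pq that by (simp_all add: indicator_nadic_child_notin[OF n _ False])
  ultimately show ?thesis by simp
qed

theorem lemma6p4:
  fixes n k j :: nat and h :: "real \<Rightarrow> real"
  assumes "n \<ge> 2" and "j < n ^ k" and "haar_on n k j h"
  shows "\<exists>m\<le>n. \<exists>hs :: nat \<Rightarrow> real \<Rightarrow> real.
           (\<forall>l<m. elementary_haar_on n k j (hs l)) \<and>
           (\<forall>x. h x = (\<Sum>l<m. hs l x)) \<and>
           (\<forall>x. \<bar>h x\<bar> = (\<Sum>l<m. \<bar>hs l x\<bar>))"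
proof -
  have n: "n > 0" using assms(1) by simp
  obtain c where h_eq: "\<And>x. h x = (\<Sum>i<n. c i * indicator (nadic_child n k j i) x)"
    and "(\<Sum>i<n. c i) = 0"
    using haar_on_step_function[OF n assms(3)] by blast
  then obtain m a p q where m: "m \<le> card {i\<in>{..<n}. c i \<noteq> 0}"
    and pq: "\<forall>l<m. p l \<in> {..<n} \<and> q l \<in> {..<n}"
    and c_eq: "\<forall>i\<in>{..<n}. c i = (\<Sum>l<m. dipole (a l) (p l) (q l) i) \<and>
                          \<bar>c i\<bar> = (\<Sum>l<m. \<bar>dipole (a l) (p l) (q l) i\<bar>)"
    using zero_sum_dipole_decomposition[of "{..<n}" c] by blast
  define hs where "hs l x = a l * (indicator (nadic_child n k j (p l)) x - indicator (nadic_child n k j (q l)) x)"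
    for l x
  have "m \<le> n"
    using m card_mono[of "{..<n}" "{i\<in>{..<n}. c i \<noteq> 0}"] by fastforce
  moreover have "\<forall>l<m. elementary_haar_on n k j (hs l)"
    using pq elementary_haar_on_child_difference[OF n] by (simp add: hs_def[abs_def])
  moreover have pointwise: "h x = (\<Sum>l<m. hs l x) \<and> \<bar>h x\<bar> = (\<Sum>l<m. \<bar>hs l x\<bar>)" for x
    unfolding h_eq hs_def by (rule step_function_dipole_expansion[OF n pq c_eq])
  ultimately show ?thesis
    using conjunct1[OF pointwise] conjunct2[OF pointwise] by (intro exI[of _ m] conjI exI[of _ hs] allI) auto
qed

end
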